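(* Let $\delta\in(0,1/2)$ and let $y_0>2$ be such that for every $y\in[2,y_0]$ and $R>2$ the map $x\mapsto g_R(x,y)x^{-\delta}$ is non-increasing on $(0,\infty)$. Then for all $R>2$, $x\ge0$, $y\in[2,y_0]$: (i) $xg_R(x,y)\le(1+\delta)\rho_R(x,y)$; (ii) $xg_R(x,y)^2\le(1+2\delta)h_R(x,y)$; (iii) $xh_R(x,y)\le(1+\delta)^2\rho_R(x,y)^2$; (iv) $xg_R(x,y)^2-h_R(x,y)\le\dfrac{2\delta(1+\delta)}{1+2\delta}\rho_R(x,y)g_R(x,y)$; (v) $\rho_R(x,y)^2\le2(1+2\delta)\phi_R(x,y)\le2(1+2\delta)\tau(x,y)$; (vi) $(\partial_x\psi_R(x,y))^2\le(1+2\delta)g_R(x,y)^2$.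
   Context: Let $\xi$ be a nondecreasing $C^2$ function on $[0,\infty)$ with $\xi(x)=(x-1)^3\vee0$ for $x\in[0,3/2]$ and $\xi(x)=1$ for $x\ge2$. For $x\ge0$, $y\ge2$: $\zeta(x,y)=2x+(yx^{y-1}-2x)\xi(x)$, $\tau(x,y)=\int_0^x\zeta(s,y)\,ds$. For $R>2$: $g_R(x,y)=\sqrt{(\partial_x\zeta)(x\wedge R,y)}$, $h_R(x,y)=\int_0^xg_R(s,y)^2\,ds$, $\phi_R(x,y)=\int_0^xh_R(s,y)\,ds$, $\rho_R(x,y)=\int_0^xg_R(s,y)\,ds$, $\psi_R(x,y)=\sqrt{xh_R(x,y)}$ (at $x=0$, $\partial_x\psi_R$ denotes the right derivative). *)

theory Defs
  imports "HOL-Analysis.Analysis"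
begin

definition C2_on_nonneg :: "(real \<Rightarrow> real) \<Rightarrow> bool" where
  "C2_on_nonneg f \<longleftrightarrow> (\<exists>f1 f2.
     (\<forall>x\<ge>0. (f has_real_derivative f1 x) (at x within {0..})) \<and>
     (\<forall>x\<ge>0. (f1 has_real_derivative f2 x) (at x within {0..})) \<and>
     continuous_on {0..} f2)"

definition admissible_xi :: "(real \<Rightarrow> real) \<Rightarrow> bool" where
  "admissible_xi \<xi> \<longleftrightarrow> mono_on {0..} \<xi> \<and> C2_on_nonneg \<xi> \<and>
     (\<forall>x\<in>{0..3/2}. \<xi> x = max ((x - 1) ^ 3) 0) \<and>
     (\<forall>x\<ge>2. \<xi> x = 1)"

definition zeta :: "(real \<Rightarrow> real) \<Rightarrow> real \<Rightarrow> real \<Rightarrow> real" where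
  "zeta \<xi> x y = 2 * x + (y * x powr (y - 1) - 2 * x) * \<xi> x"

definition tau :: "(real \<Rightarrow> real) \<Rightarrow> real \<Rightarrow> real \<Rightarrow> real" where
  "tau \<xi> x y = integral {0..x} (\<lambda>s. zeta \<xi> s y)"

definition dzeta :: "(real \<Rightarrow> real) \<Rightarrow> real \<Rightarrow> real \<Rightarrow> real" where
  "dzeta \<xi> x y = vector_derivative (\<lambda>s. zeta \<xi> s y) (at x within {0..})"

definition gR :: "(real \<Rightarrow> real) \<Rightarrow> real \<Rightarrow> real \<Rightarrow> real \<Rightarrow> real" where
  "gR \<xi> R x y = sqrt (dzeta \<xi> (min x R) y)"

definition hR :: "(real \<Rightarrow> real) \<Rightarrow> real \<Rightarrow> real \<Rightarrow> real \<Rightarrow> real" where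
  "hR \<xi> R x y = integral {0..x} (\<lambda>s. (gR \<xi> R s y)\<^sup>2)"

definition phiR :: "(real \<Rightarrow> real) \<Rightarrow> real \<Rightarrow> real \<Rightarrow> real \<Rightarrow> real" where
  "phiR \<xi> R x y = integral {0..x} (\<lambda>s. hR \<xi> R s y)"

definition rhoR :: "(real \<Rightarrow> real) \<Rightarrow> real \<Rightarrow> real \<Rightarrow> real \<Rightarrow> real" where
  "rhoR \<xi> R x y = integral {0..x} (\<lambda>s. gR \<xi> R s y)"

definition psiR :: "(real \<Rightarrow> real) \<Rightarrow> real \<Rightarrow> real \<Rightarrow> real \<Rightarrow> real" where
  "psiR \<xi> R x y = sqrt (x * hR \<xi> R x y)"

end

theory Submission
  imports Defs
begin

text \<open>Monotonicity of \<open>g x\<^sup>-\<^sup>\<delta>\<close> gives the power minorant \<open>g s \<ge> g x (s/x)\<^sup>\<delta>\<close> for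
  \<open>s \<le> x\<close>; integrating it against \<open>1\<close> and squaring before integrating yields (i) and (ii).
  The concrete shape of \<open>\<partial>\<^sub>x\<zeta>\<close> (equal to \<open>2\<close> on \<open>[0,1]\<close>, nondecreasing on \<open>[2,\<infinity>)\<close>) together with
  \<open>2\<^sup>\<delta> \<le> 1 + \<delta>\<close> makes \<open>g\<^sub>R\<close> increasing up to the factor \<open>1 + \<delta>\<close>, which bounds \<open>\<rho>\<close> and \<open>h\<close>
  from above and gives (iii) and (iv). Cauchy--Schwarz \<open>\<rho>\<^sup>2 \<le> x h\<close> combined with (ii)
  gives \<open>\<rho> g \<le> (1 + 2\<delta>) h\<close>, which integrates to (v); the comparison \<open>\<phi> \<le> \<tau>\<close> follows from
  \<open>g\<^sub>R\<^sup>2 \<le> \<partial>\<^sub>x\<zeta>\<close>. Finally \<open>\<psi>' = (h + x g\<^sup>2) / (2\<surd>(x h))\<close>, and the two-sided bounds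
  \<open>x g\<^sup>2 \<le> (1 + 2\<delta>) h\<close>, \<open>h \<le> (1 + \<delta>)\<^sup>2 x g\<^sup>2\<close> bound this quotient as in (vi).\<close>

lemma at_within_Icc_neq_bot: "a < (b::real) \<Longrightarrow> x \<in> {a..b} \<Longrightarrow> at x within {a..b} \<noteq> bot"
  by (metis atLeastAtMost_iff atLeastatMost_empty atLeastatMost_empty_iff
    at_within_Icc_at at_within_Icc_at_left at_within_Icc_at_right
    linorder_neq_iff trivial_limit_at trivial_limit_at_left_real
    trivial_limit_at_right_real)

lemma at_within_Ici_neq_bot: "x \<in> {a::real..} \<Longrightarrow> at x within {a..} \<noteq> bot"
  by (metis (no_types, lifting) atLeast_iff at_within_union bot_eq_sup_iff
    ivl_disj_un_one(7) trivial_limit_at_right_real)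

lemma has_real_derivative_within_const_imp_zero:
  assumes "(f has_real_derivative D) (at x within S)" "at x within S \<noteq> bot"
    and "x \<in> S" "\<And>s. s \<in> S \<Longrightarrow> f s = c"
  shows "D = 0"
proof -
  have "((\<lambda>_. c) has_real_derivative D) (at x within S)"
    by (rule has_field_derivative_transform_within[OF assms(1) zero_less_one]) (use assms in auto)
  then show ?thesis
    using has_field_derivative_unique[OF _ DERIV_const assms(2)] by blast
qed

lemma two_powr_le_one_plus: assumes "0 \<le> d" "d \<le> 1" shows "2 powr d \<le> 1 + (d::real)"
proof -
  have "exp ((1 - d) *\<^sub>R 0 + d *\<^sub>R ln 2) \<le> (1 - d) * exp 0 + d * exp (ln 2)"
    by (rule convex_onD[OF exp_convex]) (use assms in auto)
  then show ?thesis by (simp add: powr_def mult.commute)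
qed

lemma sum_sq_le_of_ratio_bounds:
  fixes A B d :: real
  assumes "0 < d" "d < 1/2" "0 \<le> A" "0 \<le> B" "B \<le> (1 + 2*d) * A" "A \<le> (1+d)\<^sup>2 * B"
  shows "(A + B)\<^sup>2 \<le> 4 * (1 + 2*d) * A * B"
proof -
  define c where "c = 1 + 2*d"
  define a where "a = (1+d)\<^sup>2"
  have "c*(4*c-2-a)-1 = 8*d + 11*d\<^sup>2 - 2*d^3" unfolding a_def c_def
    by (simp add: power2_eq_square power3_eq_cube algebra_simps)
  moreover have "2*d^3 \<le> d\<^sup>2" using assms by (simp add: power2_eq_square power3_eq_cube)
  ultimately have "0 \<le> c*(4*c-2-a)-1"
    using assms by (smt (verit) zero_le_power2)
  moreover have "0 \<le> (c*A - B)*(a*B - A)" using assms unfolding a_def c_def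
    by (intro mult_nonneg_nonneg) linarith+
  moreover have "0 \<le> (a-c)*B*B"
    using assms unfolding a_def c_def by (simp add: power2_eq_square algebra_simps)
  moreover have "c*(4*c*A*B - (A+B)\<^sup>2) = (c*A - B)*(a*B - A) + (c*(4*c-2-a)-1)*A*B + (a-c)*B*B"
    by (simp add: power2_eq_square algebra_simps)
  ultimately have "0 \<le> c*(4*c*A*B - (A+B)\<^sup>2)" using assms by simp
  moreover have "0 < c" using assms unfolding c_def by simp
  ultimately show ?thesis unfolding c_def by (simp add: zero_le_mult_iff)
qed

section \<open>Weights with power-type growth\<close>

locale positive_weight =
  fixes g :: "real \<Rightarrow> real"
  assumes continuous_g: "continuous_on {0..} g"
    and g_pos: "\<And>t. 0 \<le> t \<Longrightarrow> 0 < g t"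
begin

definition rho :: "real \<Rightarrow> real" where "rho x = integral {0..x} g"
definition h :: "real \<Rightarrow> real" where "h x = integral {0..x} (\<lambda>s. (g s)\<^sup>2)"

lemma continuous_on_g_Icc: "continuous_on {0..x} g"
  by (rule continuous_on_subset[OF continuous_g]) auto

lemma has_integral_rho: "(g has_integral rho x) {0..x}"
  unfolding rho_def by (intro integrable_integral integrable_continuous_interval continuous_on_g_Icc)

lemma has_integral_h: "((\<lambda>s. (g s)\<^sup>2) has_integral h x) {0..x}"
  unfolding h_def
  by (intro integrable_integral integrable_continuous_interval continuous_intros continuous_on_g_Icc)

lemma rho_nonneg: "0 \<le> rho x"
  by (rule has_integral_nonneg[OF has_integral_rho]) (auto intro: less_imp_le g_pos)

lemma h_nonneg: "0 \<le> h x"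
  by (rule has_integral_nonneg[OF has_integral_h]) auto

lemma rho_has_derivative: "0 \<le> t \<Longrightarrow> t \<le> b \<Longrightarrow> (rho has_real_derivative g t) (at t within {0..b})"
  unfolding rho_def[abs_def] by (rule integral_has_real_derivative[OF continuous_on_g_Icc]) auto

lemma h_has_derivative:
  "0 \<le> t \<Longrightarrow> t \<le> b \<Longrightarrow> (h has_real_derivative (g t)\<^sup>2) (at t within {0..b})"
  unfolding h_def[abs_def]
  by (rule integral_has_real_derivative) (auto intro!: continuous_intros continuous_on_g_Icc)

lemma continuous_on_h: "continuous_on {0..x} h"
  by (rule DERIV_continuous_on[of _ _ "\<lambda>t. (g t)\<^sup>2"]) (use h_has_derivative in auto)

text \<open>Cauchy--Schwarz, from the nonnegativity of the integral of \<open>(g - rho x / x)\<^sup>2\<close>.\<close>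
lemma rho_sq_le_x_h: assumes "0 \<le> x" shows "(rho x)\<^sup>2 \<le> x * h x"
proof (cases "x = 0")
  case True then show ?thesis by (simp add: rho_def h_def)
next
  case False
  then have x: "0 < x" using assms by simp
  define c where "c = rho x / x"
  have "((\<lambda>s. (g s)\<^sup>2 - 2 * c * g s + c\<^sup>2) has_integral h x - 2 * c * rho x + c\<^sup>2 * x) {0..x}"
  proof (intro has_integral_add has_integral_diff has_integral_h)
    show "((\<lambda>s. 2 * c * g s) has_integral 2 * c * rho x) {0..x}"
      by (rule has_integral_mult_right[OF has_integral_rho])
    show "((\<lambda>s. c\<^sup>2) has_integral c\<^sup>2 * x) {0..x}"
      using has_integral_const_real[of "c\<^sup>2" 0 x] x by (simp add: mult.commute)
  qed
  moreover have "(g s)\<^sup>2 - 2 * c * g s + c\<^sup>2 = (g s - c)\<^sup>2" for s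
    by (simp add: power2_eq_square algebra_simps)
  ultimately have "((\<lambda>s. (g s - c)\<^sup>2) has_integral h x - 2 * c * rho x + c\<^sup>2 * x) {0..x}"
    by simp
  then have "0 \<le> h x - 2 * c * rho x + c\<^sup>2 * x"
    by (rule has_integral_nonneg) simp
  also have "h x - 2 * c * rho x + c\<^sup>2 * x = h x - (rho x)\<^sup>2 / x"
    unfolding c_def using x by (simp add: field_simps power2_eq_square)
  finally show ?thesis using x by (simp add: field_simps)
qed

end

locale regular_weight = positive_weight g for g +
  fixes \<delta> :: real
  assumes delta_pos: "0 < \<delta>" and delta_less_half: "\<delta> < 1/2"
    and antimono_g_powr: "antimono_on {0<..} (\<lambda>x. g x * x powr (- \<delta>))"
    and almost_mono: "\<And>t s. 0 \<le> t \<Longrightarrow> t \<le> s \<Longrightarrow> g t \<le> (1 + \<delta>) * g s"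
begin

lemma g_ge_powr_minorant:
  assumes "0 \<le> s" "s \<le> x" "0 < x"
  shows "g x * x powr (- \<delta>) * s powr \<delta> \<le> g s"
proof (cases "s = 0")
  case True then show ?thesis using g_pos[of 0] by simp
next
  case False
  then have s: "0 < s" using assms by simp
  have "g x * x powr (- \<delta>) \<le> g s * s powr (- \<delta>)"
    using monotone_onD[OF antimono_g_powr, of s x] s assms by auto
  then have "g x * x powr (- \<delta>) * s powr \<delta> \<le> g s * s powr (- \<delta>) * s powr \<delta>"
    by (intro mult_right_mono) auto
  also have "\<dots> = g s" using s by (simp add: mult.assoc powr_add[symmetric])
  finally show ?thesis .
qed

lemma x_g_le_rho: assumes "0 \<le> x" shows "x * g x \<le> (1 + \<delta>) * rho x"
proof (cases "x = 0")
  case True then show ?thesis by (simp add: rho_def)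
next
  case False
  then have x: "0 < x" using assms by simp
  define c where "c = g x * x powr (- \<delta>)"
  have "((\<lambda>s. c * s powr \<delta>) has_integral c * (x powr (\<delta>+1) / (\<delta>+1))) {0..x}"
    using has_integral_powr_from_0[of \<delta> x] delta_pos x by (intro has_integral_mult_right) auto
  then have "c * (x powr (\<delta>+1) / (\<delta>+1)) \<le> rho x"
    by (rule has_integral_le[OF _ has_integral_rho]) (use g_ge_powr_minorant x in \<open>auto simp: c_def\<close>)
  moreover have "c * (x powr (\<delta>+1) / (\<delta>+1)) = g x * x / (1 + \<delta>)"
    unfolding c_def using x by (simp add: powr_add[symmetric] mult.assoc add.commute)
  ultimately show ?thesis using delta_pos by (simp add: field_simps)
qed

lemma x_g_sq_le_h: assumes "0 \<le> x" shows "x * (g x)\<^sup>2 \<le> (1 + 2 * \<delta>) * h x"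
proof (cases "x = 0")
  case True then show ?thesis by (simp add: h_def)
next
  case False
  then have x: "0 < x" using assms by simp
  define c where "c = (g x * x powr (- \<delta>))\<^sup>2"
  have "((\<lambda>s. c * s powr (2*\<delta>)) has_integral c * (x powr (2*\<delta>+1) / (2*\<delta>+1))) {0..x}"
    using has_integral_powr_from_0[of "2*\<delta>" x] delta_pos x by (intro has_integral_mult_right) auto
  then have "c * (x powr (2*\<delta>+1) / (2*\<delta>+1)) \<le> h x"
  proof (rule has_integral_le[OF _ has_integral_h])
    fix s assume s: "s \<in> {0..x}"
    have "(g x * x powr (- \<delta>) * s powr \<delta>)\<^sup>2 \<le> (g s)\<^sup>2"
      using g_ge_powr_minorant[of s x] g_pos[of x] s x by (intro power_mono) auto
    moreover have "(g x * x powr (- \<delta>) * s powr \<delta>)\<^sup>2 = c * s powr (2*\<delta>)"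
      unfolding c_def using s by (simp add: power_mult_distrib power2_eq_square powr_add[symmetric])
    ultimately show "c * s powr (2*\<delta>) \<le> (g s)\<^sup>2" by simp
  qed
  moreover have "c * (x powr (2*\<delta>+1) / (2*\<delta>+1)) = (g x)\<^sup>2 * x / (1 + 2*\<delta>)"
  proof -
    have "(x powr (- \<delta>))\<^sup>2 * x powr (2*\<delta>+1) = x"
      using x by (simp add: power2_eq_square powr_add[symmetric])
    then show ?thesis unfolding c_def
      by (simp add: power_mult_distrib add.commute mult.assoc)
  qed
  ultimately show ?thesis using delta_pos by (simp add: field_simps)
qed

lemma rho_le_x_g: assumes "0 \<le> x" shows "rho x \<le> (1 + \<delta>) * x * g x"
proof -
  have "rho x \<le> integral {0..x} (\<lambda>s. (1 + \<delta>) * g x)"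
    unfolding rho_def
    by (rule integral_le) (use has_integral_rho[of x] almost_mono in \<open>auto simp: rho_def\<close>)
  then show ?thesis using assms by (simp add: mult_ac)
qed

lemma h_le_g_rho: assumes "0 \<le> x" shows "h x \<le> (1 + \<delta>) * g x * rho x"
proof -
  have "((\<lambda>s. ((1 + \<delta>) * g x) * g s) has_integral (1 + \<delta>) * g x * rho x) {0..x}"
    by (intro has_integral_mult_right has_integral_rho)
  then show ?thesis
  proof (rule has_integral_le[OF has_integral_h])
    fix s assume "s \<in> {0..x}"
    then show "(g s)\<^sup>2 \<le> (1 + \<delta>) * g x * g s"
      using almost_mono[of s x] g_pos[of s] by (auto simp: power2_eq_square intro: mult_right_mono)
  qed
qed

lemma x_h_le_rho_sq: assumes "0 \<le> x" shows "x * h x \<le> (1 + \<delta>)\<^sup>2 * (rho x)\<^sup>2"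
proof -
  have "x * h x \<le> x * ((1 + \<delta>) * g x * rho x)"
    using h_le_g_rho[OF assms] assms by (intro mult_left_mono) auto
  also have "\<dots> = ((1 + \<delta>) * rho x) * (x * g x)" by (simp add: mult_ac)
  also have "\<dots> \<le> ((1 + \<delta>) * rho x) * ((1 + \<delta>) * rho x)"
    using x_g_le_rho[OF assms] rho_nonneg[of x] delta_pos by (intro mult_left_mono) auto
  finally show ?thesis by (simp add: power2_eq_square mult_ac)
qed

lemma x_g_sq_minus_h_le: assumes "0 \<le> x"
  shows "x * (g x)\<^sup>2 - h x \<le> 2 * \<delta> * (1 + \<delta>) / (1 + 2 * \<delta>) * rho x * g x"
proof -
  have "x * (g x)\<^sup>2 - h x \<le> x * (g x)\<^sup>2 - x * (g x)\<^sup>2 / (1 + 2 * \<delta>)"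
    using x_g_sq_le_h[OF assms] delta_pos by (simp add: field_simps)
  also have "\<dots> = 2 * \<delta> / (1 + 2 * \<delta>) * ((x * g x) * g x)"
    using delta_pos by (simp add: field_simps power2_eq_square)
  also have "\<dots> \<le> 2 * \<delta> / (1 + 2 * \<delta>) * (((1 + \<delta>) * rho x) * g x)"
    using x_g_le_rho[OF assms] g_pos[OF assms] delta_pos
    by (intro mult_left_mono mult_right_mono) auto
  also have "\<dots> = 2 * \<delta> * (1 + \<delta>) / (1 + 2 * \<delta>) * rho x * g x" by simp
  finally show ?thesis .
qed

lemma rho_g_le_h: assumes "0 \<le> x" shows "rho x * g x \<le> (1 + 2 * \<delta>) * h x"
proof -
  have "(rho x * g x)\<^sup>2 \<le> (x * h x) * (g x)\<^sup>2"
    unfolding power_mult_distrib using rho_sq_le_x_h[OF assms] by (intro mult_right_mono) auto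
  also have "\<dots> = h x * (x * (g x)\<^sup>2)" by simp
  also have "\<dots> \<le> h x * ((1 + 2 * \<delta>) * h x)"
    using x_g_sq_le_h[OF assms] h_nonneg[of x] by (rule mult_left_mono)
  also have "\<dots> \<le> ((1 + 2 * \<delta>) * h x)\<^sup>2"
  proof -
    have "h x \<le> (1 + 2 * \<delta>) * h x"
      using mult_right_mono[of 1 "1 + 2 * \<delta>" "h x"] h_nonneg[of x] delta_pos by simp
    then show ?thesis
      unfolding power2_eq_square using h_nonneg[of x] delta_pos by (intro mult_right_mono) auto
  qed
  finally have "(rho x * g x)\<^sup>2 \<le> ((1 + 2 * \<delta>) * h x)\<^sup>2" .
  then show ?thesis
    by (rule power2_le_imp_le) (use h_nonneg[of x] delta_pos in simp)
qed

lemma rho_sq_le_integral_h: assumes "0 \<le> x"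
  shows "(rho x)\<^sup>2 \<le> 2 * (1 + 2 * \<delta>) * integral {0..x} h"
proof -
  have "((\<lambda>t. 2 * rho t * g t) has_integral (rho x)\<^sup>2 - (rho 0)\<^sup>2) {0..x}"
  proof (rule fundamental_theorem_of_calculus[OF assms])
    fix t assume "t \<in> {0..x}"
    then have "((\<lambda>t. (rho t)\<^sup>2) has_real_derivative 2 * rho t * g t) (at t within {0..x})"
      by (auto intro!: derivative_eq_intros rho_has_derivative)
    then show "((\<lambda>t. (rho t)\<^sup>2) has_vector_derivative 2 * rho t * g t) (at t within {0..x})"
      by (simp add: has_real_derivative_iff_has_vector_derivative)
  qed
  moreover have "((\<lambda>t. 2 * (1 + 2 * \<delta>) * h t) has_integral 2 * (1 + 2 * \<delta>) * integral {0..x} h) {0..x}"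
    by (intro has_integral_mult_right integrable_integral integrable_continuous_interval continuous_on_h)
  ultimately have "(rho x)\<^sup>2 - (rho 0)\<^sup>2 \<le> 2 * (1 + 2 * \<delta>) * integral {0..x} h"
  proof (rule has_integral_le)
    fix t assume "t \<in> {0..x}"
    then show "2 * rho t * g t \<le> 2 * (1 + 2 * \<delta>) * h t"
      using rho_g_le_h[of t] by (simp only: mult.assoc) simp
  qed
  then show ?thesis by (simp add: rho_def)
qed

lemma sqrt_x_h_has_derivative_bound:
  assumes "0 < x"
  shows "\<exists>D. ((\<lambda>s. sqrt (s * h s)) has_real_derivative D) (at x) \<and>
          D\<^sup>2 \<le> (1 + 2 * \<delta>) * (g x)\<^sup>2"
proof -
  have g_x: "0 < g x" using g_pos assms by auto
  then have "0 < x * (g x)\<^sup>2" using assms by simp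
  then have "0 < (1 + 2 * \<delta>) * h x" using x_g_sq_le_h[of x] assms by linarith
  then have h_x: "0 < h x" using delta_pos by (simp add: zero_less_mult_iff)
  then have x_h: "0 < x * h x" using assms by simp
  define S where "S = h x + x * (g x)\<^sup>2"
  have "(h has_real_derivative (g x)\<^sup>2) (at x)"
    using h_has_derivative[of x "x+1"] at_within_Icc_at[of 0 x "x+1"] assms by auto
  then have "((\<lambda>s. s * h s) has_real_derivative S) (at x)"
    using DERIV_mult[OF DERIV_ident, of h "(g x)\<^sup>2" x] by (simp add: S_def mult.commute)
  then have "((\<lambda>s. sqrt (s * h s)) has_real_derivative inverse (sqrt (x * h x)) / 2 * S) (at x)"
    by (rule DERIV_chain2[of sqrt _ "\<lambda>s. s * h s", OF DERIV_real_sqrt[OF x_h]])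
  moreover have "inverse (sqrt (x * h x)) / 2 * S = S / (2 * sqrt (x * h x))"
    by (simp add: field_simps)
  moreover have "(S / (2 * sqrt (x * h x)))\<^sup>2 \<le> (1 + 2 * \<delta>) * (g x)\<^sup>2"
  proof -
    have "h x \<le> (1 + \<delta>) * g x * rho x" using h_le_g_rho assms by auto
    also have "\<dots> \<le> (1 + \<delta>) * g x * ((1 + \<delta>) * x * g x)"
      using rho_le_x_g[of x] assms g_x delta_pos by (intro mult_left_mono) auto
    finally have "h x \<le> (1 + \<delta>)\<^sup>2 * (x * (g x)\<^sup>2)" by (simp add: power2_eq_square mult_ac)
    then have "S\<^sup>2 \<le> 4 * (1 + 2 * \<delta>) * h x * (x * (g x)\<^sup>2)"
      unfolding S_def
      by (rule sum_sq_le_of_ratio_bounds[OF delta_pos delta_less_half, rotated 3])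
        (use x_g_sq_le_h[of x] h_x assms in auto)
    moreover have "(S / (2 * sqrt (x * h x)))\<^sup>2 = S\<^sup>2 / (4 * (x * h x))"
      using x_h by (simp add: power_divide power_mult_distrib)
    moreover have "4 * (1 + 2 * \<delta>) * h x * (x * (g x)\<^sup>2) / (4 * (x * h x)) = (1 + 2 * \<delta>) * (g x)\<^sup>2"
      using h_x assms by (simp add: field_simps)
    ultimately show ?thesis using x_h
      by (metis divide_right_mono less_imp_le mult_pos_pos zero_less_numeral)
  qed
  ultimately show ?thesis by metis
qed

end

section \<open>The cutoff and \<open>\<zeta>\<close>\<close>

lemma admissible_xi_vanishes:
  assumes "admissible_xi \<xi>" "0 \<le> x" "x \<le> 1"
  shows "\<xi> x = 0"
proof -
  have "(x - 1) ^ 3 \<le> 0" using assms by (simp add: power_le_zero_eq_numeral)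
  then show ?thesis using assms unfolding admissible_xi_def by auto
qed

lemma admissible_xi_eq_one: "admissible_xi \<xi> \<Longrightarrow> 2 \<le> x \<Longrightarrow> \<xi> x = 1"
  unfolding admissible_xi_def by auto

lemma admissible_xi_nonneg:
  assumes "admissible_xi \<xi>" "0 \<le> x"
  shows "0 \<le> \<xi> x"
proof -
  have "\<xi> 0 \<le> \<xi> x"
    using assms mono_onD[of "{0..}" \<xi> 0 x] unfolding admissible_xi_def by auto
  then show ?thesis using admissible_xi_vanishes[OF assms(1), of 0] by simp
qed

locale cutoff =
  fixes \<xi> \<xi>' :: "real \<Rightarrow> real"
  assumes admissible: "admissible_xi \<xi>"
    and xi_has_derivative: "\<And>x. 0 \<le> x \<Longrightarrow> (\<xi> has_real_derivative \<xi>' x) (at x within {0..})"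
    and continuous_xi': "continuous_on {0..} \<xi>'"

lemma admissible_xi_imp_cutoff:
  assumes "admissible_xi \<xi>"
  obtains \<xi>' where "cutoff \<xi> \<xi>'"
proof -
  obtain \<xi>' \<xi>'' where d1: "\<And>x. x \<ge> 0 \<Longrightarrow> (\<xi> has_real_derivative \<xi>' x) (at x within {0..})"
    and d2: "\<And>x. x \<ge> 0 \<Longrightarrow> (\<xi>' has_real_derivative \<xi>'' x) (at x within {0..})"
    using assms unfolding admissible_xi_def C2_on_nonneg_def by blast
  have "continuous_on {0..} \<xi>'" by (rule DERIV_continuous_on[OF d2]) auto
  then show ?thesis using that[of \<xi>'] assms d1 by (simp add: cutoff_def)
qed

context cutoff
begin

lemma xi_has_derivative_at: "0 < x \<Longrightarrow> (\<xi> has_real_derivative \<xi>' x) (at x)"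
  using xi_has_derivative[of x] at_within_interior[of x "{0..}"] by auto

lemma xi'_nonneg: "0 < x \<Longrightarrow> 0 \<le> \<xi>' x"
  using admissible unfolding admissible_xi_def
  by (intro mono_on_imp_deriv_nonneg[OF _ xi_has_derivative_at]) auto

lemma xi'_vanishes: "0 \<le> x \<Longrightarrow> x \<le> 1 \<Longrightarrow> \<xi>' x = 0"
  by (rule has_real_derivative_within_const_imp_zero[of \<xi> _ x "{0..1}" 0])
    (use at_within_Icc_neq_bot[of 0 1 x] in \<open>auto intro: admissible_xi_vanishes[OF admissible]
      has_field_derivative_subset[OF xi_has_derivative]\<close>)

lemma xi'_vanishes_ge_two: "2 \<le> x \<Longrightarrow> \<xi>' x = 0"
  by (rule has_real_derivative_within_const_imp_zero[of \<xi> _ x "{2..}" 1])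
    (use at_within_Ici_neq_bot[of x 2] in \<open>auto intro: admissible_xi_eq_one[OF admissible]
      has_field_derivative_subset[OF xi_has_derivative]\<close>)

text \<open>At \<open>x = 0\<close> the \<open>powr\<close> terms are junk values, harmless because \<open>\<xi> 0 = \<xi>' 0 = 0\<close>.\<close>
definition zeta' :: "real \<Rightarrow> real \<Rightarrow> real" where
  "zeta' x y = 2 + (y*(y-1)*x powr (y-2) - 2) * \<xi> x + (y * x powr (y-1) - 2*x) * \<xi>' x"

lemma zeta'_eq_two: "0 \<le> x \<Longrightarrow> x \<le> 1 \<Longrightarrow> zeta' x y = 2"
  by (simp add: zeta'_def admissible_xi_vanishes[OF admissible] xi'_vanishes)

lemma zeta_has_derivative:
  assumes "0 \<le> x"
  shows "((\<lambda>s. zeta \<xi> s y) has_real_derivative zeta' x y) (at x within {0..})"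
proof (cases "x = 0")
  case True
  have "((\<lambda>s. 2 * s) has_real_derivative 2) (at x within {0..})"
    by (auto intro!: derivative_eq_intros)
  then have "((\<lambda>s. zeta \<xi> s y) has_real_derivative 2) (at x within {0..})"
    by (rule has_field_derivative_transform_within[OF _ zero_less_one])
      (use True admissible_xi_vanishes[OF admissible] in \<open>auto simp: zeta_def dist_real_def\<close>)
  then show ?thesis using True zeta'_eq_two[of 0] by simp
next
  case False
  then have x: "0 < x" using assms by simp
  have "((\<lambda>s. 2 * s + (y * s powr (y-1) - 2 * s) * \<xi> s) has_real_derivative
      2 + ((y * ((y-1) * x powr (y-1-1)) - 2) * \<xi> x + (y * x powr (y-1) - 2 * x) * \<xi>' x)) (at x)"
    using x by (auto intro!: derivative_eq_intros xi_has_derivative_at)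
  then show ?thesis
    by (auto simp: zeta_def zeta'_def algebra_simps intro: has_field_derivative_at_within)
qed

lemma dzeta_eq: "0 \<le> x \<Longrightarrow> dzeta \<xi> x y = zeta' x y"
  unfolding dzeta_def
  by (metis at_within_Ici_neq_bot atLeast_iff zeta_has_derivative
      has_real_derivative_iff_has_vector_derivative vector_derivative_within)


lemma dzeta_eq_two: "0 \<le> x \<Longrightarrow> x \<le> 1 \<Longrightarrow> dzeta \<xi> x y = 2"
  by (simp add: dzeta_eq zeta'_eq_two)

lemma dzeta_eq_power: "2 \<le> x \<Longrightarrow> dzeta \<xi> x y = y*(y-1)*x powr (y-2)"
  by (simp add: dzeta_eq zeta'_def admissible_xi_eq_one[OF admissible] xi'_vanishes_ge_two)

lemma continuous_on_dzeta: "continuous_on {0..} (\<lambda>x. dzeta \<xi> x y)"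
proof -
  have "continuous_on {0..} \<xi>"
    by (rule DERIV_continuous_on[OF xi_has_derivative]) auto
  then have "continuous_on {1..} (\<lambda>x. zeta' x y)"
    unfolding zeta'_def
    by (intro continuous_intros continuous_on_subset[OF continuous_xi']
        continuous_on_subset[OF \<open>continuous_on {0..} \<xi>\<close>]) auto
  moreover have "continuous_on {0..1} (\<lambda>x. zeta' x y)"
    by (rule continuous_on_eq[of _ "\<lambda>_. 2"]) (auto simp: zeta'_eq_two)
  ultimately have "continuous_on ({0..1} \<union> {1..}) (\<lambda>x. zeta' x y)"
    by (intro continuous_on_closed_Un) auto
  moreover have "{0..1} \<union> {1..} = {0::real..}" by auto
  ultimately have "continuous_on {0..} (\<lambda>x. zeta' x y)" by simp
  then show ?thesis
    by (rule continuous_on_eq) (simp add: dzeta_eq)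
qed

lemma dzeta_ge_two:
  assumes "2 \<le> y" "0 \<le> x"
  shows "2 \<le> dzeta \<xi> x y"
proof (cases "x \<le> 1")
  case True then show ?thesis using assms by (simp add: dzeta_eq_two)
next
  case False
  then have x: "1 \<le> x" by simp
  have "2*1 \<le> y*(y-1)" using assms by (intro mult_mono) auto
  moreover have "1 \<le> x powr (y-2)" using ge_one_powr_ge_zero[OF x, of "y-2"] assms by simp
  ultimately have "2*1 \<le> y*(y-1) * x powr (y-2)" using assms by (intro mult_mono) auto
  moreover have "2 * x \<le> y * x powr (y-1)"
  proof -
    have "x powr 1 \<le> x powr (y-1)" using x assms by (intro powr_mono) auto
    then show ?thesis using x assms by (intro mult_mono) auto
  qed
  ultimately show ?thesis
    using x admissible_xi_nonneg[OF admissible, of x] xi'_nonneg[of x]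
    by (simp add: dzeta_eq zeta'_def)
qed

lemma dzeta_mono:
  assumes "2 \<le> y" "2 \<le> a" "a \<le> b"
  shows "dzeta \<xi> a y \<le> dzeta \<xi> b y"
proof -
  have "a powr (y-2) \<le> b powr (y-2)" using assms by (intro powr_mono2) auto
  then show ?thesis using assms by (simp add: dzeta_eq_power mult_left_mono)
qed

section \<open>The truncated weight \<open>g\<^sub>R\<close>\<close>

lemma continuous_on_gR: "0 \<le> R \<Longrightarrow> continuous_on {0..} (\<lambda>x. gR \<xi> R x y)"
  unfolding gR_def
  by (intro continuous_intros continuous_on_compose2[OF continuous_on_dzeta]) auto

lemma gR_eq_sqrt2: "1 \<le> R \<Longrightarrow> 0 \<le> t \<Longrightarrow> t \<le> 1 \<Longrightarrow> gR \<xi> R t y = sqrt 2"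
  by (simp add: gR_def dzeta_eq_two)

lemma gR_ge_sqrt2: "2 \<le> y \<Longrightarrow> 0 \<le> R \<Longrightarrow> 0 \<le> t \<Longrightarrow> sqrt 2 \<le> gR \<xi> R t y"
  unfolding gR_def using dzeta_ge_two[of y "min t R"] by simp

lemma gR_mono: "2 \<le> y \<Longrightarrow> 2 \<le> R \<Longrightarrow> 2 \<le> t \<Longrightarrow> t \<le> s \<Longrightarrow> gR \<xi> R t y \<le> gR \<xi> R s y"
  unfolding gR_def using dzeta_mono[of y "min t R" "min s R"] by simp

lemma gR_sq_le_dzeta:
  assumes "2 \<le> y" "2 \<le> R" "0 \<le> t"
  shows "(gR \<xi> R t y)\<^sup>2 \<le> dzeta \<xi> t y"
proof -
  have "(gR \<xi> R t y)\<^sup>2 = dzeta \<xi> (min t R) y"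
    unfolding gR_def using dzeta_ge_two[of y "min t R"] assms by simp
  also have "\<dots> \<le> dzeta \<xi> t y"
    using dzeta_mono[of y R t] assms by (cases "t \<le> R") auto
  finally show ?thesis .
qed


lemma gR_positive_weight: "2 \<le> y \<Longrightarrow> 0 \<le> R \<Longrightarrow> positive_weight (\<lambda>t. gR \<xi> R t y)"
  by unfold_locales
    (auto intro: continuous_on_gR order.strict_trans2[OF _ gR_ge_sqrt2])

lemma rho_gR_eq:
  "2 \<le> y \<Longrightarrow> 0 \<le> R \<Longrightarrow> positive_weight.rho (\<lambda>t. gR \<xi> R t y) = (\<lambda>x. rhoR \<xi> R x y)"
  by (simp add: fun_eq_iff positive_weight.rho_def[OF gR_positive_weight] rhoR_def)

lemma h_gR_eq:
  "2 \<le> y \<Longrightarrow> 0 \<le> R \<Longrightarrow> positive_weight.h (\<lambda>t. gR \<xi> R t y) = (\<lambda>x. hR \<xi> R x y)"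
  by (simp add: fun_eq_iff positive_weight.h_def[OF gR_positive_weight] hR_def)

lemma gR_le_sqrt2_powr:
  assumes anti: "antimono_on {0<..} (\<lambda>x. gR \<xi> R x y * x powr (- \<delta>))"
    and "1 \<le> R" "1 \<le> t"
  shows "gR \<xi> R t y \<le> sqrt 2 * t powr \<delta>"
proof -
  have "gR \<xi> R t y * t powr (- \<delta>) \<le> gR \<xi> R 1 y * 1 powr (- \<delta>)"
    using monotone_onD[OF anti, of 1 t] assms by auto
  then have "gR \<xi> R t y * t powr (- \<delta>) * t powr \<delta> \<le> sqrt 2 * t powr \<delta>"
    using gR_eq_sqrt2[of R 1 y] assms by (intro mult_right_mono) auto
  also have "gR \<xi> R t y * t powr (- \<delta>) * t powr \<delta> = gR \<xi> R t y"
    using assms by (simp add: mult.assoc powr_add[symmetric])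
  finally show ?thesis .
qed

text \<open>The constant on \<open>[0, 1]\<close>, the growth bound on \<open>[1, 2]\<close> and the monotonicity on
  \<open>[2, \<infinity>)\<close> combine into monotonicity up to the factor \<open>2 powr \<delta> \<le> 1 + \<delta>\<close>.\<close>
lemma gR_almost_mono:
  assumes "2 \<le> y" "2 \<le> R" "0 < \<delta>" "\<delta> \<le> 1"
    and anti: "antimono_on {0<..} (\<lambda>x. gR \<xi> R x y * x powr (- \<delta>))"
    and "0 \<le> t" "t \<le> s"
  shows "gR \<xi> R t y \<le> (1 + \<delta>) * gR \<xi> R s y"
proof (cases "2 \<le> t")
  case True
  have "gR \<xi> R t y \<le> 1 * gR \<xi> R s y" using gR_mono True assms by simp
  also have "\<dots> \<le> (1 + \<delta>) * gR \<xi> R s y"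
    using gR_ge_sqrt2[of y R s] assms by (intro mult_right_mono) (auto intro: order.trans[rotated])
  finally show ?thesis .
next
  case False
  have "gR \<xi> R t y \<le> sqrt 2 * (1 + \<delta>)"
  proof (cases "t \<le> 1")
    case True
    then show ?thesis using gR_eq_sqrt2[of R t y] assms by simp
  next
    case False
    have "t powr \<delta> \<le> 2 powr \<delta>" using \<open>\<not> 2 \<le> t\<close> assms by (intro powr_mono2) auto
    also have "\<dots> \<le> 1 + \<delta>" using assms by (intro two_powr_le_one_plus) auto
    finally show ?thesis
      using gR_le_sqrt2_powr[OF anti, of t] False assms
      by (smt (verit) mult_left_mono real_sqrt_ge_zero)
  qed
  also have "\<dots> \<le> (1 + \<delta>) * gR \<xi> R s y"
    using gR_ge_sqrt2[of y R s] assms by (simp add: mult.commute)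
  finally show ?thesis .
qed

lemma gR_regular_weight:
  assumes "2 \<le> y" "2 \<le> R" "0 < \<delta>" "\<delta> < 1/2"
    and "antimono_on {0<..} (\<lambda>x. gR \<xi> R x y * x powr (- \<delta>))"
  shows "regular_weight (\<lambda>t. gR \<xi> R t y) \<delta>"
  using assms gR_positive_weight gR_almost_mono[of y R \<delta>]
  by (simp add: regular_weight_def regular_weight_axioms_def)

lemma hR_le_zeta:
  assumes "2 \<le> y" "2 \<le> R" "0 \<le> s"
  shows "hR \<xi> R s y \<le> zeta \<xi> s y"
proof -
  interpret positive_weight "\<lambda>t. gR \<xi> R t y" using gR_positive_weight assms by simp
  have "((\<lambda>t. dzeta \<xi> t y) has_integral zeta \<xi> s y - zeta \<xi> 0 y) {0..s}"
  proof (rule fundamental_theorem_of_calculus[OF assms(3)])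
    fix t assume "t \<in> {0..s}"
    then show "((\<lambda>s. zeta \<xi> s y) has_vector_derivative dzeta \<xi> t y) (at t within {0..s})"
      using zeta_has_derivative[of t y] dzeta_eq[of t y]
      by (auto simp: has_real_derivative_iff_has_vector_derivative[symmetric]
          intro: has_field_derivative_subset)
  qed
  then have "h s \<le> zeta \<xi> s y - zeta \<xi> 0 y"
    by (rule has_integral_le[OF has_integral_h]) (use gR_sq_le_dzeta assms in auto)
  then show ?thesis by (simp add: h_def hR_def zeta_def)
qed

lemma phiR_le_tau:
  assumes "2 \<le> y" "2 \<le> R" "0 \<le> x"
  shows "phiR \<xi> R x y \<le> tau \<xi> x y"
  unfolding phiR_def tau_def
proof (rule integral_le)
  interpret positive_weight "\<lambda>t. gR \<xi> R t y" using gR_positive_weight assms by simp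
  show "(\<lambda>s. hR \<xi> R s y) integrable_on {0..x}"
    using integrable_continuous_interval[OF continuous_on_h] by (simp add: h_def[abs_def] hR_def)
  have "continuous_on {0..x} (\<lambda>s. zeta \<xi> s y)"
    by (rule DERIV_continuous_on[OF has_field_derivative_subset[OF zeta_has_derivative]]) auto
  then show "(\<lambda>s. zeta \<xi> s y) integrable_on {0..x}"
    by (rule integrable_continuous_interval)
qed (use hR_le_zeta assms in auto)

lemma psiR_has_derivative_at_0:
  assumes "1 \<le> R"
  shows "((\<lambda>s. psiR \<xi> R s y) has_real_derivative sqrt 2) (at 0 within {0..})"
proof -
  have "((\<lambda>s. sqrt 2 * s) has_real_derivative sqrt 2) (at 0 within {0..})"
    by (auto intro!: derivative_eq_intros)
  then show ?thesis
  proof (rule has_field_derivative_transform_within[OF _ zero_less_one])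
    fix s :: real assume "s \<in> {0..}" "dist s 0 < 1"
    then have s: "0 \<le> s" "s \<le> 1" by auto
    have "hR \<xi> R s y = integral {0..s} (\<lambda>_. 2)"
      unfolding hR_def by (rule integral_cong) (use gR_eq_sqrt2 assms s in auto)
    then show "sqrt 2 * s = psiR \<xi> R s y"
      using s by (simp add: psiR_def real_sqrt_mult power2_eq_square[symmetric])
  qed simp
qed

lemma psiR_derivative_bound:
  assumes "regular_weight (\<lambda>t. gR \<xi> R t y) \<delta>" "1 \<le> R" "0 \<le> x"
  shows "\<exists>D. ((\<lambda>s. psiR \<xi> R s y) has_real_derivative D) (at x within {0..}) \<and>
          D\<^sup>2 \<le> (1 + 2 * \<delta>) * (gR \<xi> R x y)\<^sup>2"
proof -
  interpret regular_weight "\<lambda>t. gR \<xi> R t y" \<delta> by fact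
  have psiR_eq: "(\<lambda>s. psiR \<xi> R s y) = (\<lambda>s. sqrt (s * h s))"
    by (simp add: psiR_def hR_def h_def)
  show ?thesis
  proof (cases "x = 0")
    case True
    have "(sqrt 2)\<^sup>2 \<le> (1 + 2 * \<delta>) * (gR \<xi> R x y)\<^sup>2"
      using gR_eq_sqrt2[OF assms(2), of 0] True delta_pos by simp
    then show ?thesis
      using psiR_has_derivative_at_0[OF assms(2)] True by blast
  next
    case False
    then show ?thesis
      using sqrt_x_h_has_derivative_bound[of x] assms
      by (auto simp: psiR_eq intro: has_field_derivative_at_within)
  qed
qed

end

theorem mainTheorem20:
  fixes \<xi> :: "real \<Rightarrow> real" and \<delta> y0 :: real
  assumes xi: "admissible_xi \<xi>"
    and delta: "0 < \<delta>" "\<delta> < 1/2"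
    and y0: "y0 > 2"
    and mono: "\<forall>y\<in>{2..y0}. \<forall>R>2. antimono_on {0<..} (\<lambda>x. gR \<xi> R x y * x powr (- \<delta>))"
  shows "\<forall>R>2. \<forall>x\<ge>0. \<forall>y\<in>{2..y0}.
     x * gR \<xi> R x y \<le> (1 + \<delta>) * rhoR \<xi> R x y \<and>
     x * (gR \<xi> R x y)\<^sup>2 \<le> (1 + 2 * \<delta>) * hR \<xi> R x y \<and>
     x * hR \<xi> R x y \<le> (1 + \<delta>)\<^sup>2 * (rhoR \<xi> R x y)\<^sup>2 \<and>
     x * (gR \<xi> R x y)\<^sup>2 - hR \<xi> R x y
       \<le> 2 * \<delta> * (1 + \<delta>) / (1 + 2 * \<delta>) * rhoR \<xi> R x y * gR \<xi> R x y \<and>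
     (rhoR \<xi> R x y)\<^sup>2 \<le> 2 * (1 + 2 * \<delta>) * phiR \<xi> R x y \<and>
     2 * (1 + 2 * \<delta>) * phiR \<xi> R x y \<le> 2 * (1 + 2 * \<delta>) * tau \<xi> x y \<and>
     (\<exists>D. ((\<lambda>s. psiR \<xi> R s y) has_real_derivative D) (at x within {0..}) \<and>
          D\<^sup>2 \<le> (1 + 2 * \<delta>) * (gR \<xi> R x y)\<^sup>2)"
proof -
  obtain \<xi>' where "cutoff \<xi> \<xi>'" using admissible_xi_imp_cutoff[OF xi] .
  then interpret cutoff \<xi> \<xi>' .
  have weight: "regular_weight (\<lambda>t. gR \<xi> R t y) \<delta>" if "R > 2" "y \<in> {2..y0}" for R y
    using gR_regular_weight delta mono that by simp
  show ?thesis
    using regular_weight.x_g_le_rho[OF weight] regular_weight.x_g_sq_le_h[OF weight]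
      regular_weight.x_h_le_rho_sq[OF weight] regular_weight.x_g_sq_minus_h_le[OF weight]
      regular_weight.rho_sq_le_integral_h[OF weight] phiR_le_tau psiR_derivative_bound[OF weight]
      delta
    by (auto simp: rho_gR_eq h_gR_eq phiR_def)
qed

end
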